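(* For all $v,w\in\overline{C}$ we have $T(v)=T(w)$.
   Context: All graphs are simple. $\mathcal{G}^*$ denotes the class of graphs in which any two distinct odd cycles share at most one edge. Standing setting: $G\in\mathcal{G}^*$ is $2$-connected, and $C$ is a longest odd cycle of $G$ with $|C|\ge 5$. We also write $C$ for its vertex set. Let $\overline{C}=V(G)\setminus C$, assumed nonempty. For $v\in\overline{C}$ and $w\in C$, $v$ touches $w$ if there is a $v,w$-path meeting $C$ only at $w$. $T(v)=\{w\in C: v \text{ touches } w\}$. *)

theory Defs
  imports Main
begin

definition simple_graph :: "'a set \<Rightarrow> 'a set set \<Rightarrow> bool" where
  "simple_graph V E \<longleftrightarrow> finite V \<and> (\<forall>e\<in>E. e \<subseteq> V \<and> card e = 2)"

definition is_path :: "'a set \<Rightarrow> 'a set set \<Rightarrow> 'a list \<Rightarrow> bool" where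
  "is_path V E P \<longleftrightarrow> P \<noteq> [] \<and> distinct P \<and> set P \<subseteq> V \<and>
     (\<forall>i. Suc i < length P \<longrightarrow> {P ! i, P ! Suc i} \<in> E)"

definition is_cycle :: "'a set \<Rightarrow> 'a set set \<Rightarrow> 'a list \<Rightarrow> bool" where
  "is_cycle V E C \<longleftrightarrow> 3 \<le> length C \<and> distinct C \<and> set C \<subseteq> V \<and>
     (\<forall>i < length C. {C ! i, C ! ((Suc i) mod length C)} \<in> E)"

definition cycle_edges :: "'a list \<Rightarrow> 'a set set" where
  "cycle_edges C = {{C ! i, C ! ((Suc i) mod length C)} | i. i < length C}"

definition is_odd_cycle :: "'a set \<Rightarrow> 'a set set \<Rightarrow> 'a list \<Rightarrow> bool" where
  "is_odd_cycle V E C \<longleftrightarrow> is_cycle V E C \<and> odd (length C)"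

definition in_Gstar :: "'a set \<Rightarrow> 'a set set \<Rightarrow> bool" where
  "in_Gstar V E \<longleftrightarrow> simple_graph V E \<and>
     (\<forall>C D. is_odd_cycle V E C \<longrightarrow> is_odd_cycle V E D \<longrightarrow>
        cycle_edges C \<noteq> cycle_edges D \<longrightarrow> card (cycle_edges C \<inter> cycle_edges D) \<le> 1)"

definition connected_graph :: "'a set \<Rightarrow> 'a set set \<Rightarrow> bool" where
  "connected_graph V E \<longleftrightarrow> V \<noteq> {} \<and>
     (\<forall>u\<in>V. \<forall>v\<in>V. \<exists>P. is_path V E P \<and> hd P = u \<and> last P = v)"

definition two_connected :: "'a set \<Rightarrow> 'a set set \<Rightarrow> bool" where
  "two_connected V E \<longleftrightarrow> 3 \<le> card V \<and> connected_graph V E \<and>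
     (\<forall>x\<in>V. connected_graph (V - {x}) {e\<in>E. x \<notin> e})"

definition longest_odd_cycle :: "'a set \<Rightarrow> 'a set set \<Rightarrow> 'a list \<Rightarrow> bool" where
  "longest_odd_cycle V E C \<longleftrightarrow> is_odd_cycle V E C \<and>
     (\<forall>D. is_odd_cycle V E D \<longrightarrow> length D \<le> length C)"

definition touches :: "'a set \<Rightarrow> 'a set set \<Rightarrow> 'a list \<Rightarrow> 'a \<Rightarrow> 'a \<Rightarrow> bool" where
  "touches V E C v w \<longleftrightarrow> w \<in> set C \<and>
     (\<exists>P. is_path V E P \<and> hd P = v \<and> last P = w \<and> set P \<inter> set C = {w})"

definition touch_set :: "'a set \<Rightarrow> 'a set set \<Rightarrow> 'a list \<Rightarrow> 'a \<Rightarrow> 'a set" where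
  "touch_set V E C v = {w \<in> set C. touches V E C v w}"

end

theory Submission
  imports Defs
begin

text \<open>Every vertex \<open>v\<close> off \<open>C\<close> touches two vertices of \<open>C\<close> (by 2-connectivity), and any two
  vertices it touches are joined by an ear, i.e.\ a path through the component of \<open>v\<close> in
  \<open>G - C\<close>. Closing an ear with an arc of \<open>C\<close> of length at least 2 gives a cycle sharing two
  edges with \<open>C\<close>, which must be even in \<open>G*\<close>; as \<open>C\<close> is odd, every ear is odd and joins two
  consecutive vertices of \<open>C\<close>. Hence \<open>T(v)\<close> is an edge of \<open>C\<close>. If \<open>T(v) \<noteq> T(w)\<close>, the ears of
  \<open>v\<close> and \<open>w\<close> lie in different components and sit on different edges of \<open>C\<close>, and replacing
  these two edges by the ears gives an odd cycle longer than \<open>C\<close>.\<close>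

fun walk :: "'a set set \<Rightarrow> 'a list \<Rightarrow> bool" where
  "walk F [] = False"
| "walk F [x] = True"
| "walk F (x # y # xs) \<longleftrightarrow> {x, y} \<in> F \<and> walk F (y # xs)"

lemma walk_nth:
  "walk F xs \<longleftrightarrow> xs \<noteq> [] \<and> (\<forall>i. Suc i < length xs \<longrightarrow> {xs ! i, xs ! Suc i} \<in> F)"
proof (induction F xs rule: walk.induct)
  case (3 F x y xs)
  have "(\<forall>i. Suc i < length (x # y # xs) \<longrightarrow> {(x # y # xs) ! i, (x # y # xs) ! Suc i} \<in> F)
      \<longleftrightarrow> {x, y} \<in> F \<and> (\<forall>i. Suc i < length (y # xs) \<longrightarrow> {(y # xs) ! i, (y # xs) ! Suc i} \<in> F)"
    by (auto simp: nth_Cons split: nat.splits)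
  then show ?case using 3 by simp
qed auto

lemma walk_not_Nil: "walk F xs \<Longrightarrow> xs \<noteq> []"
  by (cases xs) auto

lemma is_path_iff_walk: "is_path V E P \<longleftrightarrow> walk E P \<and> distinct P \<and> set P \<subseteq> V"
  unfolding is_path_def walk_nth by auto

lemma walk_append:
  "xs \<noteq> [] \<Longrightarrow> ys \<noteq> [] \<Longrightarrow> walk F (xs @ ys) \<longleftrightarrow> walk F xs \<and> walk F ys \<and> {last xs, hd ys} \<in> F"
proof (induction xs)
  case (Cons a xs)
  then show ?case by (cases xs; cases ys) auto
qed simp

lemma walk_append_Cons:
  "walk F (xs @ x # ys) \<longleftrightarrow> walk F (xs @ [x]) \<and> walk F (x # ys)"
  by (cases "xs = []") (auto simp: walk_append[of xs "x # ys"] walk_append[of xs "[x]"])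

lemma walk_rev: "walk F xs \<Longrightarrow> walk F (rev xs)"
proof (induction F xs rule: walk.induct)
  case (3 F x y xs)
  then show ?case using walk_append[of "rev xs @ [y]" "[x]" F] by (auto simp: insert_commute)
qed auto

lemma walk_mono: "walk F xs \<Longrightarrow> F \<subseteq> G \<Longrightarrow> walk G xs"
  by (auto simp: walk_nth)

lemma walk_take: "walk F xs \<Longrightarrow> 0 < m \<Longrightarrow> walk F (take m xs)"
  by (auto simp: walk_nth)

lemma walk_drop: "walk F xs \<Longrightarrow> m < length xs \<Longrightarrow> walk F (drop m xs)"
  by (auto simp: walk_nth)

lemma is_path_rev: "is_path V E P \<Longrightarrow> is_path V E (rev P)"
  by (auto simp: is_path_iff_walk walk_rev)

lemma walk_shortcut:
  assumes "walk F xs"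
  obtains ys where "walk F ys" "distinct ys" "hd ys = hd xs" "last ys = last xs" "set ys \<subseteq> set xs"
  using assms
proof (induction "length xs" arbitrary: xs rule: less_induct)
  case less
  show ?case
  proof (cases "distinct xs")
    case True
    then show ?thesis using less by blast
  next
    case False
    then obtain as x bs cs where xs: "xs = as @ [x] @ bs @ [x] @ cs"
      using not_distinct_decomp by blast
    let ?ys = "as @ x # cs"
    have "walk F (as @ x # bs @ x # cs)" using less.prems(2) xs by simp
    then have "walk F (as @ [x])" "walk F (x # bs @ x # cs)"
      using walk_append_Cons[of F as x "bs @ x # cs"] by blast+
    then have "walk F ?ys"
      using walk_append_Cons[of F "x # bs" x cs] walk_append_Cons[of F as x cs] by simp
    moreover have "length ?ys < length xs" "set ?ys \<subseteq> set xs" "hd ?ys = hd xs" "last ?ys = last xs"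
      unfolding xs by (auto simp: hd_append last_append)
    ultimately show ?thesis using less.hyps[of ?ys] less.prems(1) by (metis subset_trans)
  qed
qed

lemma walk_ends_interior:
  assumes "walk F P" "hd P = x" "last P = y" "x \<noteq> y"
  obtains U where "P = x # U @ [y]"
proof -
  obtain rest where P: "P = x # rest" using assms(1,2) walk_not_Nil by (metis list.collapse)
  then have "rest \<noteq> []" using assms(3,4) by auto
  then show ?thesis
    using that[of "butlast rest"] P assms(3) append_butlast_last_id[of rest] by auto
qed

lemma walk_first_hit:
  assumes "walk F P" "last P \<in> S"
  obtains Q where "walk F Q" "hd Q = hd P" "set Q \<subseteq> set P" "set Q \<inter> S = {last Q}"
  using assms
proof (induction P arbitrary: thesis)
  case (Cons x xs)
  show ?case
  proof (cases "x \<in> S \<or> xs = []")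
    case True
    then show ?thesis using Cons.prems by (intro Cons.prems(1)[of "[x]"]) auto
  next
    case False
    then have xs: "xs \<noteq> []" "x \<notin> S" by auto
    then have "walk F xs" "{x, hd xs} \<in> F"
      using Cons.prems(2) walk_append[of "[x]" xs F] by auto
    moreover obtain Q where Q: "walk F Q" "hd Q = hd xs" "set Q \<subseteq> set xs" "set Q \<inter> S = {last Q}"
      using Cons.IH \<open>walk F xs\<close> Cons.prems(3) xs by auto
    moreover have "Q \<noteq> []" using Q(1) walk_not_Nil by blast
    ultimately have "walk F (x # Q)"
      using walk_append[of "[x]" Q F] by simp
    moreover have "set (x # Q) \<inter> S = {last (x # Q)}" using Q(4) \<open>Q \<noteq> []\<close> xs(2) by auto
    ultimately show ?thesis
      using Cons.prems(1)[of "x # Q"] Q(3) by auto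
  qed
qed simp

lemma is_cycleI:
  assumes "walk E L" "{last L, hd L} \<in> E" "distinct L" "3 \<le> length L" "set L \<subseteq> V"
  shows "is_cycle V E L"
  unfolding is_cycle_def
proof (intro conjI allI impI; (rule assms)?)
  fix i assume i: "i < length L"
  show "{L ! i, L ! (Suc i mod length L)} \<in> E"
  proof (cases "Suc i < length L")
    case True
    then show ?thesis using assms(1) by (simp add: walk_nth)
  next
    case False
    then have "i = length L - 1" "Suc i = length L" using i by simp_all
    moreover have "L \<noteq> []" using assms(4) by auto
    ultimately have "L ! i = last L" "L ! (Suc i mod length L) = hd L"
      by (auto simp: last_conv_nth hd_conv_nth)
    then show ?thesis using assms(2) by simp
  qed
qed

lemma is_cycle_edge_mod: "is_cycle V E C \<Longrightarrow> {C ! (k mod length C), C ! (Suc k mod length C)} \<in> E"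
  unfolding is_cycle_def by (metis mod_Suc_eq mod_less_divisor not_numeral_le_zero gr0I list.size(3))

lemma cycle_edges_consecutive: "Suc i < length L \<Longrightarrow> {L ! i, L ! Suc i} \<in> cycle_edges L"
  unfolding cycle_edges_def by (rule CollectI, rule exI[of _ i]) simp

lemma cycle_edges_wrap: "i < length L \<Longrightarrow> {L ! i, L ! (Suc i mod length L)} \<in> cycle_edges L"
  unfolding cycle_edges_def by blast

lemma cycle_edges_subset: "e \<in> cycle_edges L \<Longrightarrow> e \<subseteq> set L"
  unfolding cycle_edges_def by auto (metis nth_mem mod_less_divisor gr_implies_not0 neq0_conv)

lemma finite_cycle_edges: "finite (cycle_edges L)"
proof -
  have "cycle_edges L = (\<lambda>i. {L ! i, L ! (Suc i mod length L)}) ` {..<length L}"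
    unfolding cycle_edges_def by auto
  then show ?thesis by simp
qed

lemma cyclic_offset:
  fixes i j n :: nat
  assumes i: "i < n" and j: "j < n" and "i \<noteq> j"
  obtains d where "0 < d" "d < n" "(i + d) mod n = j" "(j + (n - d)) mod n = i"
proof (cases "i < j")
  case True
  have "j + (n - (j - i)) = n + i" using True j by simp
  then show ?thesis using True i j by (intro that[of "j - i"]) auto
next
  case False
  then have "j < i" using \<open>i \<noteq> j\<close> by simp
  have "i + (n + j - i) = n + j" "j + (n - (n + j - i)) = i" using \<open>j < i\<close> i by auto
  then show ?thesis using \<open>j < i\<close> i j by (intro that[of "n + j - i"]) auto
qed

text \<open>Positions are taken modulo \<open>length C\<close>; the arc has \<open>m\<close> edges, hence \<open>m + 1\<close> vertices.\<close>
definition arc :: "'a list \<Rightarrow> nat \<Rightarrow> nat \<Rightarrow> 'a list" where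
  "arc C s m = map (\<lambda>i. C ! ((s + i) mod length C)) [0..<Suc m]"

lemma length_arc [simp]: "length (arc C s m) = Suc m"
  by (simp add: arc_def)

lemma arc_not_Nil [simp]: "arc C s m \<noteq> []"
  by (simp add: arc_def del: upt_Suc)

lemma nth_arc: "i \<le> m \<Longrightarrow> arc C s m ! i = C ! ((s + i) mod length C)"
  by (simp add: arc_def nth_map_upt del: upt_Suc)

lemma hd_arc: "hd (arc C s m) = C ! (s mod length C)"
  by (simp add: hd_conv_nth nth_arc)

lemma last_arc: "last (arc C s m) = C ! ((s + m) mod length C)"
  by (simp add: last_conv_nth nth_arc)

lemma set_arc_subset: "C \<noteq> [] \<Longrightarrow> set (arc C s m) \<subseteq> set C"
  by (auto simp: arc_def)

lemma walk_arc: "is_cycle V E C \<Longrightarrow> walk E (arc C s m)"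
  unfolding walk_nth using is_cycle_edge_mod[of V E C "s + _"] by (auto simp: nth_arc)

lemma distinct_arc:
  assumes "is_cycle V E C" "m < length C"
  shows "distinct (arc C s m)"
proof -
  have "distinct C" "length C > 0" using assms(1) by (auto simp: is_cycle_def)
  have "(s + a) mod length C \<noteq> (s + b) mod length C" if "a < b" "b \<le> m" for a b
  proof
    assume "(s + a) mod length C = (s + b) mod length C"
    then have "length C dvd b - a"
      using mod_eq_dvd_iff_nat[of "s + a" "s + b"] \<open>a < b\<close> by (simp add: eq_commute)
    moreover have "0 < b - a" "b - a < length C" using that assms(2) by auto
    ultimately show False using nat_dvd_not_less by blast
  qed
  then have "(s + i) mod length C \<noteq> (s + j) mod length C" if "i \<le> m" "j \<le> m" "i \<noteq> j" for i j
    using that by (metis nat_neq_iff)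
  then show ?thesis
    using \<open>distinct C\<close> \<open>length C > 0\<close> by (auto simp: distinct_conv_nth nth_arc nth_eq_iff_index_eq)
qed

lemma cycle_split_at_two_edges:
  assumes C: "is_cycle V E C" and a: "a < length C" and b: "b < length C" and "a \<noteq> b"
  obtains T1 T2 where "walk E T1" "walk E T2" "distinct (T1 @ T2)" "set (T1 @ T2) \<subseteq> set C"
    "length (T1 @ T2) = length C"
    "hd T1 = C ! (Suc a mod length C)" "last T1 = C ! b"
    "hd T2 = C ! (Suc b mod length C)" "last T2 = C ! a"
proof -
  let ?n = "length C"
  define A where "A = arc C (Suc a) (?n - 1)"
  have n_pos: "0 < ?n" using a by linarith
  have len_A: "length A = ?n" unfolding A_def using n_pos by simp
  have "Suc a + (?n - 1) = a + ?n" using n_pos by simp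
  then have last_A: "last A = C ! a" unfolding A_def using a by (simp add: last_arc)
  obtain d where d: "Suc d < ?n" "(Suc a + d) mod ?n = b"
  proof -
    obtain d' where "0 < d'" "d' < ?n" "(a + d') mod ?n = b"
      using cyclic_offset[OF a b \<open>a \<noteq> b\<close>] by blast
    then show ?thesis using that[of "d' - 1"] by simp
  qed
  have A_d: "A ! d = C ! b" unfolding A_def using d by (simp add: nth_arc)
  have "A ! Suc d = C ! (Suc (Suc a + d) mod ?n)" unfolding A_def using d by (simp add: nth_arc)
  then have A_Suc_d: "A ! Suc d = C ! (Suc b mod ?n)" using d(2) by (metis mod_Suc_eq)
  show ?thesis
  proof (rule that[of "take (Suc d) A" "drop (Suc d) A"])
    show "walk E (take (Suc d) A)" "walk E (drop (Suc d) A)"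
      using walk_take[of E A "Suc d"] walk_drop[of E A "Suc d"] walk_arc[OF C] d len_A
      unfolding A_def by auto
    show "distinct (take (Suc d) A @ drop (Suc d) A)"
      unfolding A_def using distinct_arc[OF C] n_pos by simp
    show "set (take (Suc d) A @ drop (Suc d) A) \<subseteq> set C"
      unfolding A_def using set_arc_subset n_pos by simp
    show "length (take (Suc d) A @ drop (Suc d) A) = ?n" using len_A by simp
    show "hd (take (Suc d) A) = C ! (Suc a mod ?n)"
      unfolding A_def using d by (simp add: hd_arc)
    show "last (take (Suc d) A) = C ! b"
      using d len_A A_d by (simp add: take_Suc_conv_app_nth)
    show "hd (drop (Suc d) A) = C ! (Suc b mod ?n)"
      using d len_A A_Suc_d by (simp add: hd_drop_conv_nth)
    show "last (drop (Suc d) A) = C ! a" using d len_A last_A by simp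
  qed
qed

definition reach_avoiding :: "'a set \<Rightarrow> 'a set set \<Rightarrow> 'a set \<Rightarrow> 'a \<Rightarrow> 'a \<Rightarrow> bool" where
  "reach_avoiding V E S v z \<longleftrightarrow> (\<exists>W. walk E W \<and> hd W = v \<and> last W = z \<and> set W \<subseteq> V - S)"

lemma reach_avoiding_sym: "reach_avoiding V E S v z \<Longrightarrow> reach_avoiding V E S z v"
  unfolding reach_avoiding_def
  by (metis walk_rev walk_not_Nil hd_rev last_rev set_rev)

lemma touchesI:
  assumes "walk E W" "hd W = v" "last W = x" "x \<in> set C" "set W \<subseteq> V" "set W \<inter> set C \<subseteq> {x}"
  shows "touches V E C v x"
proof -
  obtain P where P: "walk E P" "distinct P" "hd P = v" "last P = x" "set P \<subseteq> set W"
    using walk_shortcut[OF assms(1)] assms(2,3) by metis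
  have "x \<in> set P" using P(1,4) walk_not_Nil last_in_set by metis
  then show ?thesis
    unfolding touches_def using P assms(4-6) by (auto simp: is_path_iff_walk)
qed

lemma touches_if_reach_avoiding:
  assumes "reach_avoiding V E (set C) v z" "touches V E C z c"
  shows "touches V E C v c"
proof -
  obtain W where W: "walk E W" "hd W = v" "last W = z" "set W \<subseteq> V - set C"
    using assms(1) unfolding reach_avoiding_def by auto
  obtain Q where Q: "is_path V E Q" "hd Q = z" "last Q = c" "set Q \<inter> set C = {c}" and c: "c \<in> set C"
    using assms(2) unfolding touches_def by blast
  have W_eq: "W = butlast W @ [z]"
    using W(1,3) walk_not_Nil by (metis append_butlast_last_id)
  have Q_eq: "Q = z # tl Q"
    using Q(1,2) by (cases Q) (auto simp: is_path_def)
  let ?R = "butlast W @ z # tl Q"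
  have "walk E ?R"
    using walk_append_Cons[of E "butlast W" z "tl Q"] W(1) Q(1) W_eq Q_eq by (simp add: is_path_iff_walk)
  moreover have "hd ?R = v" using W(2) W_eq by (cases "butlast W") auto
  moreover have "last ?R = c" using Q(3) Q_eq by (metis last_appendR list.distinct(1))
  moreover have "set (butlast W) \<subseteq> V - set C" using W(4) by (auto dest: in_set_butlastD)
  then have "set ?R \<subseteq> V" "set ?R \<inter> set C \<subseteq> {c}"
    using Q Q_eq by (auto simp: is_path_def)
  ultimately show ?thesis using touchesI c by metis
qed

lemma touch_set_eq_if_reach_avoiding:
  "reach_avoiding V E (set C) v z \<Longrightarrow> touch_set V E C v = touch_set V E C z"
  using touches_if_reach_avoiding[of V E C v z] touches_if_reach_avoiding[of V E C z v]
    reach_avoiding_sym[of V E "set C" v z]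
  unfolding touch_set_def by blast

lemma reach_avoiding_along_touching_path:
  assumes P: "is_path V E P" "hd P = v" "last P = x" "set P \<inter> set C = {x}"
    and z: "z \<in> set P" "z \<notin> set C"
  shows "reach_avoiding V E (set C) v z"
proof -
  obtain ps qs where P_eq: "P = ps @ z # qs" using z(1) split_list by metis
  have "x \<in> set (z # qs)" using P(3) P_eq by (metis last_appendR last_in_set list.distinct(1))
  then have "x \<notin> set ps" using P(1) P_eq by (auto simp: is_path_def)
  then have "set (ps @ [z]) \<subseteq> V - set C" using P(1,4) P_eq z by (auto simp: is_path_def)
  moreover have "walk E (ps @ [z])"
    using P(1) P_eq walk_append_Cons[of E ps z qs] by (simp add: is_path_iff_walk)
  moreover have "hd (ps @ [z]) = v" using P(2) P_eq by (cases ps) auto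
  ultimately show ?thesis unfolding reach_avoiding_def by (intro exI[of _ "ps @ [z]"]) auto
qed

lemma touches_on_walk:
  assumes "walk E P" "set P \<subseteq> V" "hd P = v" "last P \<in> set C"
  obtains x where "x \<in> set P" "touches V E C v x"
proof -
  obtain Q where Q: "walk E Q" "hd Q = v" "set Q \<subseteq> set P" "set Q \<inter> set C = {last Q}"
    using walk_first_hit[of E P "set C"] assms by metis
  then have "touches V E C v (last Q)"
    using touchesI[of E Q v "last Q" C V] assms(2) by blast
  moreover have "last Q \<in> set P" using Q(1,3) walk_not_Nil last_in_set by blast
  ultimately show ?thesis using that by blast
qed

lemma walk_avoiding_chords:
  assumes "is_path V E P" "set P \<inter> set C \<subseteq> {x}"
  shows "walk {e \<in> E. \<not> e \<subseteq> set C} P"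
  unfolding walk_nth
proof (intro conjI allI impI)
  show "P \<noteq> []" using assms(1) by (simp add: is_path_def)
  fix i assume i: "Suc i < length P"
  have "P ! i \<noteq> P ! Suc i" using assms(1) i by (simp add: is_path_def nth_eq_iff_index_eq)
  moreover have "P ! i \<in> set P" "P ! Suc i \<in> set P" using i by auto
  ultimately have "\<not> {P ! i, P ! Suc i} \<subseteq> set C" using assms(2) by auto
  then show "{P ! i, P ! Suc i} \<in> {e \<in> E. \<not> e \<subseteq> set C}"
    using assms(1) i by (simp add: is_path_def)
qed

text \<open>The ear is found inside the union of the two touching paths; its interior is nonempty
  because these paths use no edge with both ends on \<open>C\<close>.\<close>
lemma ear_between_touched:
  assumes v: "v \<notin> set C" and tx: "touches V E C v x" and ty: "touches V E C v y" and "x \<noteq> y"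
  obtains U where "U \<noteq> []" "is_path V E (x # U @ [y])" "set U \<inter> set C = {}"
    "\<forall>z\<in>set U. reach_avoiding V E (set C) v z"
proof -
  let ?F = "{e \<in> E. \<not> e \<subseteq> set C}"
  obtain P1 where P1: "is_path V E P1" "hd P1 = v" "last P1 = x" "set P1 \<inter> set C = {x}"
    and "x \<in> set C" using tx unfolding touches_def by blast
  obtain P2 where P2: "is_path V E P2" "hd P2 = v" "last P2 = y" "set P2 \<inter> set C = {y}"
    and "y \<in> set C" using ty unfolding touches_def by blast
  obtain R1 R2 where P1_eq: "P1 = v # R1" and P2_eq: "P2 = v # R2"
    using P1(1,2) P2(1,2) by (metis is_path_def list.collapse)
  have "R1 \<noteq> []" "R2 \<noteq> []"
    using P1_eq P2_eq P1(3) P2(3) v \<open>x \<in> set C\<close> \<open>y \<in> set C\<close> by auto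
  let ?W = "rev R1 @ v # R2"
  have "walk ?F P1" "walk ?F P2"
    using walk_avoiding_chords P1(1,4) P2(1,4) by (metis order_refl)+
  moreover have "rev P1 = rev R1 @ [v]" using P1_eq by simp
  ultimately have "walk ?F ?W"
    using walk_rev[of ?F P1] P2_eq walk_append_Cons[of ?F "rev R1" v R2] by simp
  then obtain P where P: "walk ?F P" "distinct P" "hd P = hd ?W" "last P = last ?W" "set P \<subseteq> set ?W"
    by (rule walk_shortcut)
  have "hd ?W = x"
    using P1(3) P1_eq \<open>R1 \<noteq> []\<close> by (simp add: hd_rev)
  moreover have "last ?W = y"
    using P2(3) P2_eq by (metis last_appendR list.distinct(1))
  ultimately have P_ends: "hd P = x" "last P = y" using P(3,4) by simp_all
  have set_W: "set ?W = set P1 \<union> set P2"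
    using arg_cong[OF P1_eq, of set] arg_cong[OF P2_eq, of set] by auto
  then obtain U where P_eq: "P = x # U @ [y]"
    using walk_ends_interior[OF P(1) P_ends] \<open>x \<noteq> y\<close> by blast
  have "U \<noteq> []"
  proof
    assume "U = []"
    then have "{x, y} \<in> ?F" using P(1) P_eq by simp
    then show False using \<open>x \<in> set C\<close> \<open>y \<in> set C\<close> by simp
  qed
  moreover have "is_path V E (x # U @ [y])"
    using P P_eq walk_mono[of ?F P E] set_W P1(1) P2(1) by (auto simp: is_path_iff_walk)
  moreover have U_C: "set U \<inter> set C = {}"
    using P(2,5) P_eq set_W P1(4) P2(4) by auto
  moreover have "reach_avoiding V E (set C) v z" if "z \<in> set U" for z
    using reach_avoiding_along_touching_path[OF P1, of z] reach_avoiding_along_touching_path[OF P2, of z]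
      that U_C P(5) P_eq set_W by auto
  ultimately show ?thesis using that by blast
qed
lemma ear_path_parts:
  assumes "U \<noteq> []" "is_path V E (x # U @ [y])"
  shows "walk E U" "{x, hd U} \<in> E" "{last U, y} \<in> E" "distinct U" "set U \<subseteq> V"
  using assms walk_append[of "[x]" "U @ [y]" E] walk_append[of U "[y]" E] by (auto simp: is_path_iff_walk)

lemma no_three_cyclically_adjacent:
  assumes "4 \<le> n" "i < n" "j < n" "k < n" "i \<noteq> j" "i \<noteq> k" "j \<noteq> k"
    "j = Suc i mod n \<or> i = Suc j mod n" "k = Suc i mod n \<or> i = Suc k mod n"
    "k = Suc j mod n \<or> j = Suc k mod n"
  shows False
proof -
  have "Suc p mod n = (if Suc p = n then 0 else Suc p)" if "p < n" for p
    using that by auto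
  then show False using assms by (auto split: if_splits)
qed

locale Gstar_longest_odd_cycle =
  fixes V :: "'a set" and E :: "'a set set" and C :: "'a list"
  assumes Gstar: "in_Gstar V E"
    and two_connected: "two_connected V E"
    and longest: "longest_odd_cycle V E C"
    and length_C: "5 \<le> length C"
begin

lemma C_is_cycle: "is_cycle V E C"
  using longest by (simp add: longest_odd_cycle_def is_odd_cycle_def)

lemma distinct_C: "distinct C"
  using C_is_cycle by (simp add: is_cycle_def)

lemma set_C_subset: "set C \<subseteq> V"
  using C_is_cycle by (simp add: is_cycle_def)

lemma odd_length_C: "odd (length C)"
  using longest by (simp add: longest_odd_cycle_def is_odd_cycle_def)

text \<open>An ear \<open>U\<close> from \<open>C ! (i + d)\<close> back to \<open>C ! i\<close> closes the arc of \<open>C\<close> between them to a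
  cycle. If \<open>d \<ge> 2\<close> this cycle shares the first two edges of the arc with \<open>C\<close>, but not the edge
  into \<open>U\<close>, so \<open>G*\<close> forbids it to be odd.\<close>
lemma ear_with_long_arc_even:
  assumes i: "i < length C" and d: "2 \<le> d" "d < length C"
    and U: "U \<noteq> []" "set U \<inter> set C = {}" "distinct U" "set U \<subseteq> V" "walk E U"
    and ends: "{C ! ((i + d) mod length C), hd U} \<in> E" "{last U, C ! i} \<in> E"
  shows "even (Suc d + length U)"
proof (rule ccontr)
  assume odd_L: "odd (Suc d + length U)"
  define L where "L = arc C i d @ U"
  have arc_C: "set (arc C i d) \<subseteq> set C" by (rule set_arc_subset) (use i in auto)
  have len_L: "length L = Suc d + length U" unfolding L_def by simp
  have walk_L: "walk E L"
    unfolding L_def using walk_append[of "arc C i d" U E] walk_arc[OF C_is_cycle, of i d] U(1,5) ends(1)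
    by (simp add: last_arc)
  have closing: "{last L, hd L} \<in> E" unfolding L_def using U(1) ends(2) i by (simp add: hd_arc insert_commute)
  have distinct_L: "distinct L"
    unfolding L_def using distinct_arc[OF C_is_cycle d(2), of i] U(2,3) arc_C by auto
  have set_L: "set L \<subseteq> V" unfolding L_def using arc_C set_C_subset U(4) by auto
  have L_odd_cycle: "is_odd_cycle V E L"
    unfolding is_odd_cycle_def using is_cycleI[OF walk_L closing distinct_L _ set_L] len_L odd_L d by simp
  have L_nth: "L ! 0 = C ! i" "L ! 1 = C ! (Suc i mod length C)" "L ! 2 = C ! (Suc (Suc i) mod length C)"
    unfolding L_def using d i by (simp_all add: nth_append nth_arc)
  have e1: "{L ! 0, L ! 1} \<in> cycle_edges L \<inter> cycle_edges C"
    using cycle_edges_consecutive[of 0 L] cycle_edges_wrap[of i C] len_L d L_nth i by simp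
  have "Suc i mod length C < length C" using i by (intro mod_less_divisor) linarith
  then have e2: "{L ! 1, L ! 2} \<in> cycle_edges L \<inter> cycle_edges C"
    using cycle_edges_consecutive[of 1 L] cycle_edges_wrap[of "Suc i mod length C" C] len_L d L_nth
    by (simp add: mod_Suc_eq numeral_2_eq_2)
  have "L ! 0 \<noteq> L ! 2" "L ! 0 \<noteq> L ! 1"
    using distinct_L len_L d by (simp_all add: nth_eq_iff_index_eq)
  then have "card {{L ! 0, L ! 1}, {L ! 1, L ! 2}} = 2" by (simp add: doubleton_eq_iff)
  moreover have "card {{L ! 0, L ! 1}, {L ! 1, L ! 2}} \<le> card (cycle_edges L \<inter> cycle_edges C)"
    using e1 e2 finite_cycle_edges[of L] by (intro card_mono) auto
  ultimately have shared: "2 \<le> card (cycle_edges L \<inter> cycle_edges C)" by linarith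
  have "{L ! d, L ! Suc d} \<in> cycle_edges L" using cycle_edges_consecutive[of d L] len_L U by simp
  moreover have "L ! Suc d = hd U" unfolding L_def using U by (simp add: nth_append hd_conv_nth)
  moreover have "hd U \<notin> set C" using U by (simp add: disjoint_iff)
  ultimately have "cycle_edges L \<noteq> cycle_edges C" using cycle_edges_subset[of "{L ! d, L ! Suc d}" C] by auto
  then have "card (cycle_edges L \<inter> cycle_edges C) \<le> 1"
    using Gstar L_odd_cycle longest unfolding in_Gstar_def longest_odd_cycle_def by blast
  then show False using shared by simp
qed

text \<open>The ear closes an even cycle with each of the two arcs between its ends that has length at
  least 2. If both arcs do, the two cycles have total length \<open>length C + 2 * length U + 2\<close>,
  contradicting that \<open>C\<close> is odd; otherwise one arc is a single edge and the other gives the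
  parity of \<open>U\<close>.\<close>
lemma ear_joins_consecutive:
  assumes i: "i < length C" and j: "j < length C" and "i \<noteq> j"
    and U: "U \<noteq> []" "is_path V E (C ! i # U @ [C ! j])" "set U \<inter> set C = {}"
  shows "odd (length U) \<and> (j = Suc i mod length C \<or> i = Suc j mod length C)"
proof -
  let ?n = "length C"
  note ear = ear_path_parts[OF U(1,2)]
  obtain d where d: "0 < d" "d < ?n" "(i + d) mod ?n = j" "(j + (?n - d)) mod ?n = i"
    using cyclic_offset[OF i j \<open>i \<noteq> j\<close>] by blast
  have long_arc_from_i: "even (Suc d + length U)" if "2 \<le> d"
    using ear_with_long_arc_even[OF i that d(2), of "rev U"] U(1,3) ear d(3)
    by (simp add: walk_rev hd_rev last_rev insert_commute)
  have long_arc_from_j: "even (Suc (?n - d) + length U)" if "2 \<le> ?n - d"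
    using ear_with_long_arc_even[OF j that _ U(1,3) ear(4,5,1)] ear(2,3) d
    by (simp add: insert_commute)
  consider "d = 1" | "?n - d = 1" | "2 \<le> d" "2 \<le> ?n - d" using d by linarith
  then show ?thesis
  proof cases
    case 1
    then have "even (?n + length U)" using long_arc_from_j length_C by simp
    then show ?thesis using 1 d(3) odd_length_C by simp
  next
    case 2
    then have "Suc d = ?n" "2 \<le> d" using d(2) length_C by auto
    then have "even (?n + length U)" using long_arc_from_i by metis
    moreover have "(j + 1) mod ?n = i" using 2 d(4) by simp
    ultimately show ?thesis using odd_length_C by simp
  next
    case 3
    then have "even ((Suc (?n - d) + length U) + (Suc d + length U))"
      using long_arc_from_i long_arc_from_j by (metis even_add)
    moreover have "(Suc (?n - d) + length U) + (Suc d + length U) = ?n + 2 * (length U + 1)"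
      using d by simp
    ultimately have "even (?n + 2 * (length U + 1))" by metis
    then show ?thesis using odd_length_C by simp
  qed
qed

lemma touches_two_vertices:
  assumes v: "v \<in> V - set C"
  obtains x y where "x \<noteq> y" "touches V E C v x" "touches V E C v y"
proof -
  have conn: "connected_graph V E" and conn_x: "\<And>x. x \<in> V \<Longrightarrow> connected_graph (V - {x}) {e \<in> E. x \<notin> e}"
    using two_connected by (auto simp: two_connected_def)
  have "0 < length C" "1 < length C" using length_C by linarith+
  then have C01: "C ! 0 \<in> set C" "C ! 1 \<in> set C" "C ! 0 \<noteq> C ! 1"
    using distinct_C by (auto simp: nth_eq_iff_index_eq)
  obtain P where "is_path V E P" "hd P = v" "last P = C ! 0"
    using conn v C01 set_C_subset unfolding connected_graph_def by blast
  then obtain x where "touches V E C v x"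
    using touches_on_walk[of E P V v C] C01 by (auto simp: is_path_iff_walk)
  then have x: "x \<in> set C" "x \<in> V" using set_C_subset by (auto simp: touches_def)
  obtain y0 where y0: "y0 \<in> set C" "y0 \<noteq> x" using C01 by metis
  have "v \<in> V - {x}" "y0 \<in> V - {x}" using v x y0 set_C_subset by auto
  then obtain P' where P': "is_path (V - {x}) {e \<in> E. x \<notin> e} P'" "hd P' = v" "last P' = y0"
    using conn_x[OF x(2)] unfolding connected_graph_def by blast
  then have "walk E P'" "set P' \<subseteq> V" "x \<notin> set P'"
    using walk_mono[of "{e \<in> E. x \<notin> e}" P' E] by (auto simp: is_path_iff_walk)
  then obtain y where "y \<in> set P'" "touches V E C v y"
    using touches_on_walk[of E P' V v C] P'(2,3) y0(1) by metis
  then show ?thesis using that \<open>touches V E C v x\<close> \<open>x \<notin> set P'\<close> by metis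
qed

lemma touches_index:
  assumes "touches V E C v x"
  obtains i where "i < length C" "x = C ! i"
  using assms by (metis in_set_conv_nth touches_def)

lemma ear_between_touched_consecutive:
  assumes v: "v \<notin> set C" and tx: "touches V E C v (C ! i)" and ty: "touches V E C v (C ! j)"
    and i: "i < length C" and j: "j < length C" and "i \<noteq> j"
  obtains U where "U \<noteq> []" "odd (length U)" "is_path V E (C ! i # U @ [C ! j])" "set U \<inter> set C = {}"
    "\<forall>z\<in>set U. reach_avoiding V E (set C) v z" "j = Suc i mod length C \<or> i = Suc j mod length C"
proof -
  have "C ! i \<noteq> C ! j" using distinct_C i j \<open>i \<noteq> j\<close> by (simp add: nth_eq_iff_index_eq)
  then obtain U where "U \<noteq> []" "is_path V E (C ! i # U @ [C ! j])" "set U \<inter> set C = {}"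
    "\<forall>z\<in>set U. reach_avoiding V E (set C) v z"
    using ear_between_touched[OF v tx ty] by blast
  then show ?thesis using that ear_joins_consecutive[OF i j \<open>i \<noteq> j\<close>] by blast
qed

text \<open>A third touched vertex would be consecutive to both \<open>x\<close> and \<open>y\<close>, which are themselves
  consecutive.\<close>
lemma touch_set_eq_pair:
  assumes v: "v \<notin> set C" and tx: "touches V E C v x" and ty: "touches V E C v y" and "x \<noteq> y"
  shows "touch_set V E C v = {x, y}"
proof -
  let ?n = "length C"
  have adjacent: "l = Suc k mod ?n \<or> k = Suc l mod ?n"
    if "touches V E C v (C ! k)" "touches V E C v (C ! l)" "k < ?n" "l < ?n" "k \<noteq> l" for k l
    using ear_between_touched_consecutive[OF v that] by metis
  obtain i j where ij: "i < ?n" "x = C ! i" "j < ?n" "y = C ! j"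
    using touches_index tx ty by metis
  have "z \<in> {x, y}" if tz: "touches V E C v z" for z
  proof (rule ccontr)
    assume "z \<notin> {x, y}"
    obtain k where k: "k < ?n" "z = C ! k" using touches_index tz by metis
    have "i \<noteq> j" "i \<noteq> k" "j \<noteq> k" using ij k \<open>x \<noteq> y\<close> \<open>z \<notin> {x, y}\<close> by auto
    then show False
      using no_three_cyclically_adjacent[of ?n i j k] adjacent[of i j] adjacent[of i k] adjacent[of j k]
        ij k tx ty tz length_C by auto
  qed
  then show ?thesis using tx ty unfolding touch_set_def touches_def by auto
qed

lemma touch_set_is_cycle_edge:
  assumes v: "v \<in> V - set C"
  obtains a U where "a < length C" "touch_set V E C v = {C ! a, C ! (Suc a mod length C)}"
    "U \<noteq> []" "odd (length U)" "is_path V E (C ! a # U @ [C ! (Suc a mod length C)])"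
    "set U \<inter> set C = {}" "\<forall>z\<in>set U. reach_avoiding V E (set C) v z"
proof -
  let ?n = "length C"
  obtain x y where xy: "x \<noteq> y" "touches V E C v x" "touches V E C v y"
    using touches_two_vertices[OF v] by blast
  obtain i j where ij: "i < ?n" "x = C ! i" "j < ?n" "y = C ! j"
    using touches_index xy by metis
  have T: "touch_set V E C v = {C ! i, C ! j}" using touch_set_eq_pair v xy ij by blast
  obtain U where U: "U \<noteq> []" "odd (length U)" "is_path V E (C ! i # U @ [C ! j])"
    "set U \<inter> set C = {}" "\<forall>z\<in>set U. reach_avoiding V E (set C) v z"
    and "j = Suc i mod ?n \<or> i = Suc j mod ?n"
    using ear_between_touched_consecutive[of v i j] v xy ij by blast
  then consider "j = Suc i mod ?n" | "i = Suc j mod ?n" by blast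
  then show ?thesis
  proof cases
    case 1
    then show ?thesis using that[of i U] ij(1) T U by simp
  next
    case 2
    have "is_path V E (C ! j # rev U @ [C ! i])" using is_path_rev[OF U(3)] by simp
    then show ?thesis using that[of j "rev U"] ij(3) T U 2 by (simp add: insert_commute)
  qed
qed

text \<open>Replacing two different edges of \<open>C\<close> by disjoint odd ears gives an odd cycle longer
  than \<open>C\<close>.\<close>
lemma no_disjoint_odd_ears_on_two_edges:
  assumes a: "a < length C" and b: "b < length C" and "a \<noteq> b"
    and Uv: "Uv \<noteq> []" "odd (length Uv)" "is_path V E (C ! a # Uv @ [C ! (Suc a mod length C)])"
      "set Uv \<inter> set C = {}"
    and Uw: "Uw \<noteq> []" "odd (length Uw)" "is_path V E (C ! b # Uw @ [C ! (Suc b mod length C)])"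
      "set Uw \<inter> set C = {}"
    and disjoint: "set Uv \<inter> set Uw = {}"
  shows False
proof -
  let ?n = "length C"
  note ev = ear_path_parts[OF Uv(1,3)] and ew = ear_path_parts[OF Uw(1,3)]
  obtain T1 T2 where T: "walk E T1" "walk E T2" "distinct (T1 @ T2)" "set (T1 @ T2) \<subseteq> set C"
    "length (T1 @ T2) = ?n" "hd T1 = C ! (Suc a mod ?n)" "last T1 = C ! b"
    "hd T2 = C ! (Suc b mod ?n)" "last T2 = C ! a"
    using cycle_split_at_two_edges[OF C_is_cycle a b \<open>a \<noteq> b\<close>] by blast
  have T_ne: "T1 \<noteq> []" "T2 \<noteq> []" using T(1,2) walk_not_Nil by auto
  define L where "L = T1 @ Uw @ T2 @ Uv"
  have "walk E (T2 @ Uv)" using walk_append[of T2 Uv E] T_ne Uv(1) T(2,9) ev(1,2) by simp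
  then have "walk E (Uw @ T2 @ Uv)" using walk_append[of Uw "T2 @ Uv" E] T_ne Uw(1) T(8) ew(1,3) by simp
  then have walk_L: "walk E L"
    unfolding L_def using walk_append[of T1 "Uw @ T2 @ Uv" E] T_ne Uw(1) T(1,7) ew(2) by simp
  have closing: "{last L, hd L} \<in> E" unfolding L_def using Uv(1) T_ne T(6) ev(3) by simp
  have distinct_L: "distinct L"
    unfolding L_def using T(3,4) ev(4) ew(4) disjoint Uv(4) Uw(4) by auto
  have set_L: "set L \<subseteq> V" unfolding L_def using T(4) set_C_subset ev(5) ew(5) by auto
  have len_L: "length L = ?n + length Uw + length Uv" unfolding L_def using T(5) by simp
  have "is_odd_cycle V E L"
    unfolding is_odd_cycle_def using is_cycleI[OF walk_L closing distinct_L _ set_L] len_L length_C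
      odd_length_C Uv(2) Uw(2) by simp
  then have "length L \<le> ?n" using longest by (simp add: longest_odd_cycle_def)
  then show False using len_L Uw(1) by simp
qed

lemma touch_set_eq:
  assumes v: "v \<in> V - set C" and w: "w \<in> V - set C"
  shows "touch_set V E C v = touch_set V E C w"
proof (rule ccontr)
  assume ne: "touch_set V E C v \<noteq> touch_set V E C w"
  obtain a Uv where a: "a < length C" "touch_set V E C v = {C ! a, C ! (Suc a mod length C)}"
    and Uv: "Uv \<noteq> []" "odd (length Uv)" "is_path V E (C ! a # Uv @ [C ! (Suc a mod length C)])"
      "set Uv \<inter> set C = {}" "\<forall>z\<in>set Uv. reach_avoiding V E (set C) v z"
    using touch_set_is_cycle_edge[OF v] by blast
  obtain b Uw where b: "b < length C" "touch_set V E C w = {C ! b, C ! (Suc b mod length C)}"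
    and Uw: "Uw \<noteq> []" "odd (length Uw)" "is_path V E (C ! b # Uw @ [C ! (Suc b mod length C)])"
      "set Uw \<inter> set C = {}" "\<forall>z\<in>set Uw. reach_avoiding V E (set C) w z"
    using touch_set_is_cycle_edge[OF w] by blast
  have "a \<noteq> b"
  proof
    assume "a = b"
    then show False using a(2) b(2) ne by simp
  qed
  moreover have "set Uv \<inter> set Uw = {}"
  proof (rule ccontr)
    assume "set Uv \<inter> set Uw \<noteq> {}"
    then obtain z where "reach_avoiding V E (set C) v z" "reach_avoiding V E (set C) w z"
      using Uv(5) Uw(5) by blast
    then show False using ne touch_set_eq_if_reach_avoiding by metis
  qed
  ultimately show False
    using no_disjoint_odd_ears_on_two_edges[OF a(1) b(1) _ Uv(1-4) Uw(1-4)] by blast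
qed

end

theorem mainTheorem7:
  fixes V :: "'a set" and E :: "'a set set" and C :: "'a list"
  assumes "in_Gstar V E"
    and "two_connected V E"
    and "longest_odd_cycle V E C"
    and "5 \<le> length C"
    and "V - set C \<noteq> {}"
  shows "\<forall>v \<in> V - set C. \<forall>w \<in> V - set C. touch_set V E C v = touch_set V E C w"
proof -
  interpret Gstar_longest_odd_cycle V E C
    using assms(1-4) by unfold_locales
  show ?thesis using touch_set_eq by blast
qed

end
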